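(* Let $\emptyset\neq S\subseteq\{1,\dots,n\}$. Then $\nabla\Phi(\mathbf{x}(S))\,\mathbf{d}\le 0$ for all $\mathbf{d}\in\mathcal{F}(\mathbf{x}(S))$. Moreover, if $\nabla^2\Phi(\tilde{\mathbf{x}})$ is positive definite for every $\tilde{\mathbf{x}}\in\Delta$, then $\nabla\Phi(\mathbf{x}(S))\,\mathbf{d}<0$ for every $\mathbf{d}\in\mathcal{F}(\mathbf{x}(S))$ with $\mathrm{supp}(\mathbf{d})\not\subseteq S$.
   Context: Let $\Delta=\{\mathbf{x}\in\mathbb{R}^n:\mathbf{0}\le\mathbf{x}\le\mathbf{1},\ \mathbf{1}^{\mathsf T}\mathbf{x}=1\}$ and $\mathrm{supp}(\mathbf{x})=\{i:x_i\neq0\}$. For non-empty $S\subseteq\{1,\dots,n\}$, $\mathbf{x}(S)\in\Delta$ has $x(S)_i=1/|S|$ for $i\in S$ and $0$ otherwise. For $\mathbf{x}\in\Delta$, $\mathcal{F}(\mathbf{x})=\{\mathbf{d}\in\mathbb{R}^n:\mathbf{1}^{\mathsf T}\mathbf{d}=0,\ d_i\ge0\text{ whenever }x_i=0\}$, and $\mathcal{P}(\mathbf{x})$ is the set of vectors in $\Delta$ obtained by permuting the coordinates of $\mathbf{x}$. Let $\Phi:X\to\mathbb{R}$ be twice continuously differentiable on an open set $X\supset\Delta$, satisfying for every $\mathbf{x}\in\Delta$: (C1) $\nabla^2\Phi(\mathbf{x})$ is positive semidefinite; (C2) $\|\nabla^2\Phi(\mathbf{x})\|_2<2$ (spectral norm);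 (C3) $\Phi$ is constant on $\mathcal{P}(\mathbf{x})$. The gradient $\nabla\Phi(\mathbf{x})$ is a row vector. *)

theory Defs
  imports "HOL-Analysis.Analysis"
begin

text \<open>Coordinates of R^n are indexed by the finite type 'n (so n = CARD('n)).\<close>

definition Delta_simplex :: "(real ^ 'n) set" where
  "Delta_simplex = {x. (\<forall>i. 0 \<le> x $ i \<and> x $ i \<le> 1) \<and> (\<Sum>i\<in>UNIV. x $ i) = 1}"

definition supp :: "real ^ 'n \<Rightarrow> 'n set" where
  "supp x = {i. x $ i \<noteq> 0}"

definition xS :: "'n set \<Rightarrow> real ^ 'n" where
  "xS S = (\<chi> i. if i \<in> S then 1 / real (card S) else 0)"

definition feasible_dirs :: "real ^ 'n \<Rightarrow> (real ^ 'n) set" where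
  "feasible_dirs x = {d. (\<Sum>i\<in>UNIV. d $ i) = 0 \<and> (\<forall>i. x $ i = 0 \<longrightarrow> d $ i \<ge> 0)}"

definition perms_of :: "real ^ 'n \<Rightarrow> (real ^ 'n) set" where
  "perms_of x = {(\<chi> i. x $ p i) | p. p permutes (UNIV :: 'n set)}"

definition psd :: "real ^ 'n ^ 'n \<Rightarrow> bool" where
  "psd A \<longleftrightarrow> (\<forall>v. 0 \<le> v \<bullet> (A *v v))"

definition posdef :: "real ^ 'n ^ 'n \<Rightarrow> bool" where
  "posdef A \<longleftrightarrow> (\<forall>v. v \<noteq> 0 \<longrightarrow> 0 < v \<bullet> (A *v v))"

text \<open>Spectral norm = operator norm w.r.t. the Euclidean norm.\<close>
definition spec_norm :: "real ^ 'n ^ 'n \<Rightarrow> real" where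
  "spec_norm A = onorm (\<lambda>v. A *v v)"

end

theory Submission
  imports Defs
begin

(* Fix i in S and j outside S. Shifting the mass 1/|S| of x(S) from i to j stays in the
   simplex and ends at the permuted point, so along this segment Phi is convex (C1) with equal
   values at both ends; hence its slope grad_j - grad_i at x(S) is nonpositive, and negative when
   the Hessian is positive definite. For i, i' in S, swapping i and i' maps x(S) + t(e_i - e_i')
   to x(S) - t(e_i - e_i'), so Phi is even along that line and grad_i = grad_i'. Thus the gradient
   at x(S) is constant on S and no larger off S, while feasible directions sum to zero and are
   nonnegative off S. *)

lemma has_real_derivative_along_line:
  fixes f :: "'a::real_normed_vector \<Rightarrow> real"
  assumes "(f has_derivative f') (at (x + t *\<^sub>R w))"
  shows "((\<lambda>s. f (x + s *\<^sub>R w)) has_real_derivative f' w) (at t)"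
proof -
  have line: "((\<lambda>s. x + s *\<^sub>R w) has_derivative (\<lambda>h. h *\<^sub>R w)) (at t)"
    by (auto intro!: derivative_eq_intros)
  have "((\<lambda>s. f (x + s *\<^sub>R w)) has_derivative (\<lambda>h. f' (h *\<^sub>R w))) (at t)"
    using has_derivative_compose[OF line assms] by simp
  moreover have "(\<lambda>h. f' (h *\<^sub>R w)) = (*) (f' w)"
    using linear_scale[OF has_derivative_linear[OF assms]] by (auto simp: mult.commute)
  ultimately show ?thesis
    unfolding has_field_derivative_def by simp
qed

lemma equal_ends_deriv_eq_neg_second_deriv:
  fixes \<phi> \<phi>' \<phi>'' :: "real \<Rightarrow> real"
  assumes "0 < c" and ends: "\<phi> c = \<phi> 0"
    and \<phi>': "\<And>s. 0 \<le> s \<Longrightarrow> s \<le> c \<Longrightarrow> (\<phi> has_real_derivative \<phi>' s) (at s)"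
    and \<phi>'': "\<And>s. 0 \<le> s \<Longrightarrow> s \<le> c \<Longrightarrow> (\<phi>' has_real_derivative \<phi>'' s) (at s)"
  shows "\<exists>\<xi>>0. \<exists>\<eta>. 0 < \<eta> \<and> \<eta> < c \<and> \<phi>' 0 = - \<xi> * \<phi>'' \<eta>"
proof -
  obtain z where z: "0 < z" "z < c" "\<phi> c - \<phi> 0 = (c - 0) * \<phi>' z"
    using MVT2[OF \<open>0 < c\<close> \<phi>'] by blast
  then have "\<phi>' z = 0"
    using ends \<open>0 < c\<close> by simp
  have "(\<phi>' has_real_derivative \<phi>'' s) (at s)" if "0 \<le> s" "s \<le> z" for s
    using \<phi>'' that z by simp
  then obtain \<eta> where \<eta>: "0 < \<eta>" "\<eta> < z" "\<phi>' z - \<phi>' 0 = (z - 0) * \<phi>'' \<eta>"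
    using MVT2[OF \<open>0 < z\<close>, of \<phi>' \<phi>''] by blast
  then have "\<phi>' 0 = - z * \<phi>'' \<eta>"
    using \<open>\<phi>' z = 0\<close> by simp
  moreover have "\<eta> < c"
    using \<eta>(2) z(2) by linarith
  ultimately show ?thesis
    using z(1) \<eta>(1) by blast
qed

lemma deriv_zero_if_even:
  fixes \<phi> :: "real \<Rightarrow> real"
  assumes D: "(\<phi> has_real_derivative D) (at 0)" and "0 < e"
    and even: "\<And>t. \<bar>t\<bar> < e \<Longrightarrow> \<phi> (- t) = \<phi> t"
  shows "D = 0"
proof -
  have "((\<lambda>t. \<phi> (- t)) has_real_derivative - D) (at 0)"
    using D DERIV_mirror[where f = \<phi> and x = 0 and y = D] by simp
  then have "(\<phi> has_real_derivative - D) (at 0)"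
  proof (rule has_field_derivative_transform_within_open)
    show "open {- e <..< e}" "0 \<in> {- e <..< e}"
      using \<open>0 < e\<close> by auto
    show "\<phi> (- t) = \<phi> t" if "t \<in> {- e <..< e}" for t
      using that by (intro even) auto
  qed
  then have "D = - D"
    by (rule DERIV_unique[OF D])
  then show ?thesis
    by linarith
qed

lemma Delta_simplex_pair_le:
  assumes "y \<in> Delta_simplex" "i \<noteq> j"
  shows "y $ i + y $ j \<le> 1"
proof -
  have "(\<Sum>l\<in>{i, j}. y $ l) \<le> (\<Sum>l\<in>UNIV. y $ l)"
    by (rule sum_mono2) (use assms in \<open>auto simp: Delta_simplex_def\<close>)
  then show ?thesis
    using assms by (simp add: Delta_simplex_def)
qed

lemma Delta_simplex_move_mass:
  assumes y: "y \<in> Delta_simplex" and "i \<noteq> j" and "0 \<le> s" "s \<le> y $ i"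
  shows "y + s *\<^sub>R (axis j 1 - axis i 1) \<in> Delta_simplex"
proof -
  define z where "z = y + s *\<^sub>R (axis j 1 - axis i 1)"
  have z: "z $ l = y $ l + (if l = j then s else 0) - (if l = i then s else 0)" for l
    by (simp add: z_def axis_def)
  have y_bounds: "0 \<le> y $ l" "y $ l \<le> 1" for l
    using y by (auto simp: Delta_simplex_def)
  have "y $ i + y $ j \<le> 1"
    using Delta_simplex_pair_le[OF y \<open>i \<noteq> j\<close>] .
  then have "0 \<le> z $ l \<and> z $ l \<le> 1" for l
    using assms(2-4) y_bounds[of i] y_bounds[of l] unfolding z by auto
  moreover have "(\<Sum>l\<in>UNIV. z $ l) = (\<Sum>l\<in>UNIV. y $ l)"
    unfolding z by (simp add: sum.distrib sum_subtractf)
  ultimately show ?thesis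
    using y unfolding z_def[symmetric] by (simp add: Delta_simplex_def)
qed

lemma transpose_coords_in_perms_of: "(\<chi> l. y $ Transposition.transpose a b l) \<in> perms_of y"
  unfolding perms_of_def using permutes_swap_id[of a UNIV b] by blast

lemma xS_nth: "xS S $ l = (if l \<in> S then 1 / real (card S) else 0)"
  by (simp add: xS_def)

lemma xS_in_Delta_simplex:
  assumes "S \<noteq> {}"
  shows "xS (S :: 'n::finite set) \<in> Delta_simplex"
proof -
  have "card S > 0"
    using assms by (simp add: card_gt_0_iff)
  moreover have "(\<Sum>l\<in>UNIV. xS S $ l) = (\<Sum>l\<in>S. 1 / real (card S))"
    by (simp add: xS_nth sum.If_cases)
  ultimately show ?thesis
    by (auto simp: Delta_simplex_def xS_nth)
qed

lemma feasible_dirs_xS: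
  assumes "S \<noteq> {}"
  shows "d \<in> feasible_dirs (xS (S :: 'n::finite set))
    \<longleftrightarrow> (\<Sum>l\<in>UNIV. d $ l) = 0 \<and> (\<forall>l. l \<notin> S \<longrightarrow> 0 \<le> d $ l)"
  using assms by (auto simp: feasible_dirs_def xS_nth card_gt_0_iff)

lemma xS_transfer_eq_transpose:
  assumes "i \<in> S" "j \<notin> S"
  shows "xS S + (1 / real (card S)) *\<^sub>R (axis j 1 - axis i 1) = (\<chi> l. xS S $ Transposition.transpose i j l)"
  using assms by (auto simp: vec_eq_iff xS_nth axis_def transpose_def)

lemma xS_reflect_eq_transpose:
  assumes "i \<in> S" "i' \<in> S"
  shows "xS S + t *\<^sub>R (axis i' 1 - axis i 1)
    = (\<chi> l. (xS S + t *\<^sub>R (axis i 1 - axis i' 1)) $ Transposition.transpose i i' l)"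
  using assms by (auto simp: vec_eq_iff xS_nth axis_def transpose_def)

lemma inner_eq_sum_compl_if_const_on:
  fixes g d :: "real ^ 'n"
  assumes const: "\<And>l. l \<in> S \<Longrightarrow> g $ l = a" and sum0: "(\<Sum>l\<in>UNIV. d $ l) = 0"
  shows "g \<bullet> d = (\<Sum>l\<in>- S. (g $ l - a) * d $ l)"
proof -
  have split: "(\<Sum>l\<in>UNIV. f l) = (\<Sum>l\<in>S. f l) + (\<Sum>l\<in>- S. f l)" for f :: "'n \<Rightarrow> real"
    using sum.Int_Diff[of UNIV f S] by (simp add: Compl_eq_Diff_UNIV)
  have "g \<bullet> d = (\<Sum>l\<in>S. g $ l * d $ l) + (\<Sum>l\<in>- S. g $ l * d $ l)"
    unfolding inner_vec_def by (simp add: split)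
  also have "(\<Sum>l\<in>S. g $ l * d $ l) = a * (\<Sum>l\<in>S. d $ l)"
    by (simp add: const sum_distrib_left)
  also have "(\<Sum>l\<in>S. d $ l) = - (\<Sum>l\<in>- S. d $ l)"
    using sum0 split[of "\<lambda>l. d $ l"] by simp
  finally show ?thesis
    by (simp add: sum_distrib_left left_diff_distrib sum_subtractf)
qed

lemma inner_nonpos_if_max_on:
  fixes g d :: "real ^ 'n"
  assumes const: "\<And>l. l \<in> S \<Longrightarrow> g $ l = a" and le: "\<And>l. l \<notin> S \<Longrightarrow> g $ l \<le> a"
    and sum0: "(\<Sum>l\<in>UNIV. d $ l) = 0" and nonneg: "\<And>l. l \<notin> S \<Longrightarrow> 0 \<le> d $ l"
  shows "g \<bullet> d \<le> 0"
proof -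
  have "g \<bullet> d = (\<Sum>l\<in>- S. (g $ l - a) * d $ l)"
    using const sum0 by (rule inner_eq_sum_compl_if_const_on)
  also have "\<dots> \<le> 0"
    using le nonneg by (intro sum_nonpos) (simp add: mult_nonpos_nonneg)
  finally show ?thesis .
qed

lemma inner_neg_if_strict_max_on:
  fixes g d :: "real ^ 'n"
  assumes const: "\<And>l. l \<in> S \<Longrightarrow> g $ l = a" and less: "\<And>l. l \<notin> S \<Longrightarrow> g $ l < a"
    and sum0: "(\<Sum>l\<in>UNIV. d $ l) = 0" and nonneg: "\<And>l. l \<notin> S \<Longrightarrow> 0 \<le> d $ l"
    and "l0 \<notin> S" "d $ l0 \<noteq> 0"
  shows "g \<bullet> d < 0"
proof -
  have "0 < d $ l0"
    using nonneg[OF \<open>l0 \<notin> S\<close>] \<open>d $ l0 \<noteq> 0\<close> by simp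
  then have "(g $ l0 - a) * d $ l0 < 0"
    using less[OF \<open>l0 \<notin> S\<close>] by (simp add: mult_neg_pos)
  moreover have "(\<Sum>l\<in>- S - {l0}. (g $ l - a) * d $ l) \<le> 0"
    using less nonneg by (intro sum_nonpos) (simp add: less_imp_le mult_nonpos_nonneg)
  moreover have "g \<bullet> d = (\<Sum>l\<in>- S. (g $ l - a) * d $ l)"
    using const sum0 by (rule inner_eq_sum_compl_if_const_on)
  ultimately show ?thesis
    using \<open>l0 \<notin> S\<close> by (simp add: sum.remove)
qed

locale symmetric_convex_potential =
  fixes \<Phi> :: "real ^ 'n \<Rightarrow> real"
    and grad :: "real ^ 'n \<Rightarrow> real ^ 'n"
    and H :: "real ^ 'n \<Rightarrow> real ^ 'n ^ 'n"
    and X :: "(real ^ 'n) set"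
  assumes simplex_subset: "Delta_simplex \<subseteq> X"
    and has_grad: "\<And>x. x \<in> X \<Longrightarrow> (\<Phi> has_derivative (\<lambda>d. grad x \<bullet> d)) (at x)"
    and has_hess: "\<And>x. x \<in> X \<Longrightarrow> (grad has_derivative (\<lambda>d. H x *v d)) (at x)"
    and hess_psd: "\<And>x. x \<in> Delta_simplex \<Longrightarrow> psd (H x)"
    and perm_invariant: "\<And>x y. x \<in> Delta_simplex \<Longrightarrow> y \<in> perms_of x \<Longrightarrow> \<Phi> y = \<Phi> x"
begin

lemma grad_diff_eq_neg_hess_form:
  assumes "i \<in> S" "j \<notin> S" and v_def: "v = axis j 1 - axis i 1"
  shows "\<exists>\<xi>>0. \<exists>y\<in>Delta_simplex. grad (xS S) $ j - grad (xS S) $ i = - \<xi> * ((H y *v v) \<bullet> v)"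
proof -
  define x where "x = xS S"
  define c where "c = 1 / real (card S)"
  have "S \<noteq> {}" "i \<noteq> j"
    using assms by auto
  then have "0 < c"
    by (simp add: c_def card_gt_0_iff)
  have segment: "x + s *\<^sub>R v \<in> Delta_simplex" if "0 \<le> s" "s \<le> c" for s
    using Delta_simplex_move_mass[OF xS_in_Delta_simplex[OF \<open>S \<noteq> {}\<close>] \<open>i \<noteq> j\<close>] that \<open>i \<in> S\<close>
    by (simp add: x_def v_def c_def xS_nth)
  then have in_X: "x + s *\<^sub>R v \<in> X" if "0 \<le> s" "s \<le> c" for s
    using that simplex_subset by blast
  have ends: "\<Phi> (x + c *\<^sub>R v) = \<Phi> (x + 0 *\<^sub>R v)"
    unfolding scaleR_zero_left add_0_right x_def c_def v_def xS_transfer_eq_transpose[OF assms(1,2)]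
    by (intro perm_invariant xS_in_Delta_simplex \<open>S \<noteq> {}\<close> transpose_coords_in_perms_of)
  have slope: "((\<lambda>s. \<Phi> (x + s *\<^sub>R v)) has_real_derivative grad (x + s *\<^sub>R v) \<bullet> v) (at s)"
    if "0 \<le> s" "s \<le> c" for s
    using has_real_derivative_along_line[OF has_grad[OF in_X[OF that]]] .
  have slope': "((\<lambda>s. grad (x + s *\<^sub>R v) \<bullet> v) has_real_derivative (H (x + s *\<^sub>R v) *v v) \<bullet> v) (at s)"
    if "0 \<le> s" "s \<le> c" for s
    using has_real_derivative_along_line[OF has_derivative_inner_left[OF has_hess[OF in_X[OF that]]]] .
  obtain \<xi> \<eta> where "0 < \<xi>" "0 < \<eta>" "\<eta> < c"
      and "grad (x + 0 *\<^sub>R v) \<bullet> v = - \<xi> * ((H (x + \<eta> *\<^sub>R v) *v v) \<bullet> v)"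
    using equal_ends_deriv_eq_neg_second_deriv[OF \<open>0 < c\<close> ends slope slope'] by blast
  moreover have "grad x \<bullet> v = grad x $ j - grad x $ i"
    by (simp add: v_def inner_diff_right inner_axis)
  moreover have "x + \<eta> *\<^sub>R v \<in> Delta_simplex"
    using segment \<open>0 < \<eta>\<close> \<open>\<eta> < c\<close> by simp
  ultimately show ?thesis
    unfolding x_def by force
qed

lemma grad_xS_outside_le:
  assumes "i \<in> S" "j \<notin> S"
  shows "grad (xS S) $ j \<le> grad (xS S) $ i"
proof -
  define v :: "real ^ 'n" where "v = axis j 1 - axis i 1"
  obtain \<xi> y where "0 < \<xi>" "y \<in> Delta_simplex"
    and diff: "grad (xS S) $ j - grad (xS S) $ i = - \<xi> * ((H y *v v) \<bullet> v)"
    using grad_diff_eq_neg_hess_form[OF assms v_def] by blast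
  have "0 \<le> (H y *v v) \<bullet> v"
    using hess_psd[OF \<open>y \<in> Delta_simplex\<close>] by (simp add: psd_def inner_commute)
  then have "0 \<le> \<xi> * ((H y *v v) \<bullet> v)"
    using \<open>0 < \<xi>\<close> by simp
  then show ?thesis
    using diff by linarith
qed

lemma grad_xS_outside_less:
  assumes "\<And>x. x \<in> Delta_simplex \<Longrightarrow> posdef (H x)" and "i \<in> S" "j \<notin> S"
  shows "grad (xS S) $ j < grad (xS S) $ i"
proof -
  define v :: "real ^ 'n" where "v = axis j 1 - axis i 1"
  obtain \<xi> y where "0 < \<xi>" "y \<in> Delta_simplex"
    and diff: "grad (xS S) $ j - grad (xS S) $ i = - \<xi> * ((H y *v v) \<bullet> v)"
    using grad_diff_eq_neg_hess_form[OF assms(2,3) v_def] by blast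
  have "v $ j = 1"
    using assms(2,3) by (auto simp: v_def axis_def)
  then have "v \<noteq> 0"
    by auto
  then have "0 < (H y *v v) \<bullet> v"
    using assms(1)[OF \<open>y \<in> Delta_simplex\<close>] by (simp add: posdef_def inner_commute)
  then have "0 < \<xi> * ((H y *v v) \<bullet> v)"
    using \<open>0 < \<xi>\<close> by simp
  then show ?thesis
    using diff by linarith
qed

lemma grad_xS_const_on:
  assumes "i \<in> S" "i' \<in> S"
  shows "grad (xS S) $ i = grad (xS S) $ i'"
proof (cases "i = i'")
  case False
  define x where "x = xS S"
  define w :: "real ^ 'n" where "w = axis i 1 - axis i' 1"
  define e where "e = 1 / real (card S)"
  have "S \<noteq> {}"
    using assms by auto
  then have "0 < e" and x: "x \<in> Delta_simplex"
    by (simp_all add: e_def card_gt_0_iff x_def xS_in_Delta_simplex)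
  have line: "x + t *\<^sub>R w \<in> Delta_simplex" if "\<bar>t\<bar> < e" for t
  proof (cases "0 \<le> t")
    case True
    then show ?thesis
      using Delta_simplex_move_mass[OF x, of i' i t] False that assms(2)
      by (simp add: w_def x_def xS_nth e_def)
  next
    case negative: False
    have "x + t *\<^sub>R w = x + (- t) *\<^sub>R (axis i' 1 - axis i 1)"
      by (simp add: w_def algebra_simps)
    then show ?thesis
      using Delta_simplex_move_mass[OF x, of i i' "- t"] False that assms(1) negative
      by (simp add: x_def xS_nth e_def)
  qed
  have even: "\<Phi> (x + (- t) *\<^sub>R w) = \<Phi> (x + t *\<^sub>R w)" if "\<bar>t\<bar> < e" for t
  proof -
    have "x + (- t) *\<^sub>R w = x + t *\<^sub>R (axis i' 1 - axis i 1)"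
      by (simp add: w_def algebra_simps)
    also have "\<dots> = (\<chi> l. (x + t *\<^sub>R w) $ Transposition.transpose i i' l)"
      unfolding x_def w_def by (rule xS_reflect_eq_transpose[OF assms])
    finally show ?thesis
      using perm_invariant[OF line[OF that] transpose_coords_in_perms_of] by (simp only:)
  qed
  have "(\<Phi> has_derivative (\<lambda>d. grad x \<bullet> d)) (at (x + 0 *\<^sub>R w))"
    using has_grad simplex_subset x by auto
  then have "((\<lambda>t. \<Phi> (x + t *\<^sub>R w)) has_real_derivative grad x \<bullet> w) (at 0)"
    by (rule has_real_derivative_along_line)
  then have "grad x \<bullet> w = 0"
    using \<open>0 < e\<close> even by (rule deriv_zero_if_even)
  then show ?thesis
    by (simp add: x_def w_def inner_diff_right inner_axis)
qed simp

end

theorem lemma4: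
  fixes \<Phi> :: "real ^ 'n \<Rightarrow> real"
    and grad :: "real ^ 'n \<Rightarrow> real ^ 'n"
    and H :: "real ^ 'n \<Rightarrow> real ^ 'n ^ 'n"
    and X :: "(real ^ 'n) set"
    and S :: "'n set"
  assumes X_open: "open X" and X_sup: "Delta_simplex \<subseteq> X"
    and grad: "\<And>x. x \<in> X \<Longrightarrow> (\<Phi> has_derivative (\<lambda>d. grad x \<bullet> d)) (at x)"
    and hess: "\<And>x. x \<in> X \<Longrightarrow> (grad has_derivative (\<lambda>d. H x *v d)) (at x)"
    and hess_cont: "continuous_on X H"
    and C1: "\<And>x. x \<in> Delta_simplex \<Longrightarrow> psd (H x)"
    and C2: "\<And>x. x \<in> Delta_simplex \<Longrightarrow> spec_norm (H x) < 2"
    and C3: "\<And>x y. x \<in> Delta_simplex \<Longrightarrow> y \<in> perms_of x \<Longrightarrow> \<Phi> y = \<Phi> x"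
    and S_ne: "S \<noteq> {}"
  shows "(\<forall>d \<in> feasible_dirs (xS S). grad (xS S) \<bullet> d \<le> 0)
    \<and> ((\<forall>x \<in> Delta_simplex. posdef (H x)) \<longrightarrow>
         (\<forall>d \<in> feasible_dirs (xS S). \<not> supp d \<subseteq> S \<longrightarrow> grad (xS S) \<bullet> d < 0))"
proof -
  interpret symmetric_convex_potential \<Phi> grad H X
    using X_sup grad hess C1 C3 by unfold_locales
  obtain i where "i \<in> S"
    using S_ne by blast
  let ?g = "grad (xS S)" and ?a = "grad (xS S) $ i"
  have const: "?g $ l = ?a" if "l \<in> S" for l
    using grad_xS_const_on[OF that \<open>i \<in> S\<close>] .
  have "?g \<bullet> d \<le> 0" if "d \<in> feasible_dirs (xS S)" for d
    using that grad_xS_outside_le[OF \<open>i \<in> S\<close>] unfolding feasible_dirs_xS[OF S_ne]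
    by (intro inner_nonpos_if_max_on[OF const]) auto
  moreover have "?g \<bullet> d < 0"
    if "\<forall>x \<in> Delta_simplex. posdef (H x)" "d \<in> feasible_dirs (xS S)" "\<not> supp d \<subseteq> S" for d
  proof -
    obtain l where "l \<notin> S" "d $ l \<noteq> 0"
      using \<open>\<not> supp d \<subseteq> S\<close> by (auto simp: supp_def)
    then show ?thesis
      using that grad_xS_outside_less[OF _ \<open>i \<in> S\<close>] unfolding feasible_dirs_xS[OF S_ne]
      by (intro inner_neg_if_strict_max_on[OF const]) auto
  qed
  ultimately show ?thesis
    by blast
qed

end
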